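(* Let $N\ge 1$ and let $M=\prod_{i=1}^{N}M_i\subset\mathbb{R}^N$ be compact, with each $M_i\subset\mathbb{R}$. Let $U=\prod_{i=1}^{N}U_i\subset\mathbb{C}^N$, where each $U_i$ is an open domain of $\mathbb{C}$ symmetric about the real axis with $M_i\subset U_i$, and let $\partial\bar U:=\prod_{i=1}^N\partial \bar U_i$. Then the Cauchy kernel functions are dense in $\mathcal{F}_M$: every continuous function $f:M\to\mathbb{R}$ is a uniform limit on $M$ of finite linear combinations $\sum_{k=1}^m\theta_k K(\boldsymbol{\xi}_k,\cdot)$ with $m\ge1$, $\theta_k\in\mathbb{C}$ and $\boldsymbol{\xi}_k\in\partial\bar U$.
   Context: $\mathcal{F}_M$ denotes the space of continuous functions $M\to\mathbb{R}$. For $\boldsymbol{\xi}=(\xi^1,\dots,\xi^N)\in\partial\bar U$ and $\mathbf{x}=(x_1,\dots,x_N)\in M$, the Cauchy kernel is $K(\boldsymbol{\xi},\mathbf{x}):=\prod_{i=1}^{N}\frac{1}{\xi^i-x_i}$. *)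

theory Defs
  imports "HOL-Analysis.Analysis"
begin

text \<open>Cauchy kernel K(xi, x) = prod_i 1/(xi_i - x_i); the index type 'n is the
  finite index set {1..N}.\<close>
definition cauchy_kernel :: "complex ^ 'n::finite \<Rightarrow> real ^ 'n \<Rightarrow> complex" where
  "cauchy_kernel \<xi> x = (\<Prod>i\<in>UNIV. 1 / (\<xi> $ i - complex_of_real (x $ i)))"

definition prod_set_real :: "('n::finite \<Rightarrow> real set) \<Rightarrow> (real ^ 'n) set" where
  "prod_set_real A = {x. \<forall>i. x $ i \<in> A i}"

definition prod_set_complex :: "('n::finite \<Rightarrow> complex set) \<Rightarrow> (complex ^ 'n) set" where
  "prod_set_complex A = {z. \<forall>i. z $ i \<in> A i}"

end

(*
  For a boundary point a and boundary points xi tending to a, the kernel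
  combinations (1/(xi - t) - 1/(a - t))/(a - xi) = 1/((xi - t)(a - t)) converge uniformly on K
  to 1/(a - t)^2; inductively every power of s(t) = 1/(a - t) is approximable, and partial
  fractions turn powers of s and of cnj s = 1/(cnj a - t) into all monomials s^m (cnj s)^n with
  m + n >= 1. Since t = Re (a - 1/s(t)), the map s embeds K into the plane, with 0 playing the
  role of t = infinity. Approximating f, extended by 0 at the point 0, by a real polynomial on
  s(K) u {0} (Weierstrass) and subtracting its value at 0 leaves a polynomial in s and cnj s
  without constant term. Boundary points a as required exist because the boundary of the
  closure of a planar open set has no isolated points, and is symmetric when the set is.

  In several variables, Stone-Weierstrass reduces to sums of products of continuous functions
  of one coordinate each; approximating every factor and multiplying out expresses such a
  product through the kernels K(xi, x).
*)
theory Submission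
  imports Defs
begin

section \<open>Uniform approximation by kernel combinations\<close>

definition kernel_comb :: "('b \<Rightarrow> 'a \<Rightarrow> complex) \<Rightarrow> (complex \<times> 'b) list \<Rightarrow> 'a \<Rightarrow> complex" where
  "kernel_comb kern L t = (\<Sum>(c, \<xi>)\<leftarrow>L. c * kern \<xi> t)"

definition kernel_approximable ::
    "('b \<Rightarrow> 'a \<Rightarrow> complex) \<Rightarrow> 'b set \<Rightarrow> 'a set \<Rightarrow> ('a \<Rightarrow> complex) \<Rightarrow> bool" where
  "kernel_approximable kern F K h \<longleftrightarrow>
     (\<forall>e>0. \<exists>L. snd ` set L \<subseteq> F \<and> (\<forall>t\<in>K. cmod (h t - kernel_comb kern L t) < e))"

lemma kernel_comb_Nil [simp]: "kernel_comb kern [] t = 0"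
  by (simp add: kernel_comb_def)

lemma kernel_comb_Cons [simp]: "kernel_comb kern ((c, \<xi>) # L) t = c * kern \<xi> t + kernel_comb kern L t"
  by (simp add: kernel_comb_def)

lemma kernel_comb_append [simp]:
  "kernel_comb kern (L1 @ L2) t = kernel_comb kern L1 t + kernel_comb kern L2 t"
  by (simp add: kernel_comb_def)

lemma kernel_comb_scale:
  "kernel_comb kern (map (\<lambda>(d, \<xi>). (c * d, \<xi>)) L) t = c * kernel_comb kern L t"
  by (induction L) (auto simp: algebra_simps)

lemma kernel_approximable_uniform_limit:
  assumes "\<And>e. e > 0 \<Longrightarrow> \<exists>g. kernel_approximable kern F K g \<and> (\<forall>t\<in>K. cmod (h t - g t) < e)"
  shows "kernel_approximable kern F K h"
  unfolding kernel_approximable_def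
proof (intro allI impI)
  fix e :: real assume "e > 0"
  then obtain g where g: "kernel_approximable kern F K g" "\<forall>t\<in>K. cmod (h t - g t) < e/2"
    using assms[of "e/2"] by auto
  then obtain L where L: "snd ` set L \<subseteq> F" "\<forall>t\<in>K. cmod (g t - kernel_comb kern L t) < e/2"
    using \<open>e > 0\<close> unfolding kernel_approximable_def by (meson half_gt_zero)
  have "cmod (h t - kernel_comb kern L t) < e" if "t \<in> K" for t
    using norm_triangle_lt[of "h t - g t" "g t - kernel_comb kern L t" e] g(2) L(2) that by force
  with L(1) show "\<exists>L. snd ` set L \<subseteq> F \<and> (\<forall>t\<in>K. cmod (h t - kernel_comb kern L t) < e)"
    by blast
qed

lemma kernel_approximable_kernel_comb:
  assumes "snd ` set L \<subseteq> F"
  shows "kernel_approximable kern F K (kernel_comb kern L)"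
  using assms unfolding kernel_approximable_def by force

lemma kernel_approximable_kernel:
  assumes "\<xi> \<in> F"
  shows "kernel_approximable kern F K (kern \<xi>)"
  using assms unfolding kernel_approximable_def by (intro allI impI exI[of _ "[(1, \<xi>)]"]) auto

lemma kernel_approximable_cong:
  assumes "kernel_approximable kern F K g" "\<And>t. t \<in> K \<Longrightarrow> g t = h t"
  shows "kernel_approximable kern F K h"
  using assms unfolding kernel_approximable_def by metis

lemma kernel_approximable_add:
  assumes "kernel_approximable kern F K g" "kernel_approximable kern F K h"
  shows "kernel_approximable kern F K (\<lambda>t. g t + h t)"
proof (rule kernel_approximable_uniform_limit)
  fix e :: real assume "e > 0"
  then obtain L1 L2 where L1: "snd ` set L1 \<subseteq> F" "\<forall>t\<in>K. cmod (g t - kernel_comb kern L1 t) < e/2"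
    and L2: "snd ` set L2 \<subseteq> F" "\<forall>t\<in>K. cmod (h t - kernel_comb kern L2 t) < e/2"
    using assms unfolding kernel_approximable_def by (meson half_gt_zero)
  have "cmod (g t + h t - kernel_comb kern (L1 @ L2) t) < e" if "t \<in> K" for t
    using norm_triangle_lt[of "g t - kernel_comb kern L1 t" "h t - kernel_comb kern L2 t" e]
      L1(2) L2(2) that by (force simp: algebra_simps)
  moreover have "snd ` set (L1 @ L2) \<subseteq> F"
    using L1(1) L2(1) by auto
  ultimately show "\<exists>f. kernel_approximable kern F K f \<and> (\<forall>t\<in>K. cmod (g t + h t - f t) < e)"
    by (blast intro: kernel_approximable_kernel_comb)
qed

lemma kernel_approximable_cmult:
  assumes "kernel_approximable kern F K h"
  shows "kernel_approximable kern F K (\<lambda>t. c * h t)"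
proof (rule kernel_approximable_uniform_limit)
  fix e :: real assume "e > 0"
  define C where "C = cmod c + 1"
  have "C > 0" by (simp add: C_def add_nonneg_pos)
  then obtain L where L: "snd ` set L \<subseteq> F" "\<forall>t\<in>K. cmod (h t - kernel_comb kern L t) < e / C"
    using assms \<open>e > 0\<close> unfolding kernel_approximable_def by (meson divide_pos_pos)
  let ?L = "map (\<lambda>(d, \<xi>). (c * d, \<xi>)) L"
  have "cmod (c * h t - kernel_comb kern ?L t) < e" if "t \<in> K" for t
  proof -
    have "cmod (c * h t - kernel_comb kern ?L t) = cmod c * cmod (h t - kernel_comb kern L t)"
      by (simp add: kernel_comb_scale right_diff_distrib flip: norm_mult)
    also have "\<dots> \<le> C * cmod (h t - kernel_comb kern L t)"
      by (simp add: C_def mult_right_mono)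
    also have "\<dots> < C * (e / C)"
      using L(2) that \<open>C > 0\<close> by (intro mult_strict_left_mono) auto
    also have "\<dots> = e"
      using \<open>C > 0\<close> by simp
    finally show ?thesis .
  qed
  moreover have "snd ` set ?L \<subseteq> F" using L(1) by force
  ultimately show "\<exists>f. kernel_approximable kern F K f \<and> (\<forall>t\<in>K. cmod (c * h t - f t) < e)"
    by (blast intro: kernel_approximable_kernel_comb)
qed

lemma kernel_approximable_diff:
  assumes "kernel_approximable kern F K g" "kernel_approximable kern F K h"
  shows "kernel_approximable kern F K (\<lambda>t. g t - h t)"
  using kernel_approximable_add[OF assms(1) kernel_approximable_cmult[OF assms(2), of "-1"]] by simp

section \<open>One variable\<close>

abbreviation cauchy_kernel1 :: "complex \<Rightarrow> real \<Rightarrow> complex" where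
  "cauchy_kernel1 \<xi> t \<equiv> 1 / (\<xi> - complex_of_real t)"

lemma cauchy_kernel1_mult:
  assumes "\<xi> \<noteq> \<eta>" "\<xi> \<noteq> complex_of_real t" "\<eta> \<noteq> complex_of_real t"
  shows "cauchy_kernel1 \<xi> t * cauchy_kernel1 \<eta> t = 1 / (\<eta> - \<xi>) * (cauchy_kernel1 \<xi> t - cauchy_kernel1 \<eta> t)"
  using assms by (simp add: divide_simps)

lemma partial_fractions_power_step:
  fixes u v c :: "'a::comm_ring_1"
  assumes "u * v = c * (u - v)"
  shows "c * (u ^ Suc m * v ^ n - u ^ m * v ^ Suc n) = u ^ Suc m * v ^ Suc n"
proof -
  have "c * (u ^ Suc m * v ^ n - u ^ m * v ^ Suc n) = u ^ m * v ^ n * (c * (u - v))"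
    by (simp add: algebra_simps)
  also have "\<dots> = u ^ m * v ^ n * (u * v)"
    by (simp only: assms)
  also have "\<dots> = u ^ Suc m * v ^ Suc n"
    by (simp add: algebra_simps)
  finally show ?thesis .
qed

lemma real_compact_separated_from_point:
  fixes K :: "real set"
  assumes "compact K" "a \<notin> complex_of_real ` K"
  obtains d where "d > 0" "\<And>t. t \<in> K \<Longrightarrow> d \<le> cmod (a - complex_of_real t)"
proof -
  have "compact (complex_of_real ` K)"
    using assms(1) by (intro compact_continuous_image continuous_intros)
  then obtain d where "d > 0" "\<forall>z\<in>complex_of_real ` K. d \<le> dist a z"
    using separate_point_closed[OF compact_imp_closed assms(2)] by blast
  then show thesis
    using that by (simp add: dist_norm)
qed

lemma norm_recip_diff_le:
  fixes a \<xi> z :: complex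
  assumes "d > 0" "d \<le> cmod (a - z)" "cmod (\<xi> - a) \<le> d / 2"
  shows "cmod (1 / (\<xi> - z) - 1 / (a - z)) \<le> 2 * cmod (\<xi> - a) / d\<^sup>2"
proof -
  have "cmod (a - z) \<le> cmod (\<xi> - z) + cmod (\<xi> - a)"
    using norm_triangle_ineq[of "\<xi> - z" "a - \<xi>"] by (simp add: norm_minus_commute)
  then have "d / 2 \<le> cmod (\<xi> - z)"
    using assms by linarith
  then have "\<xi> \<noteq> z" "a \<noteq> z"
    using assms by auto
  then have "cmod (1 / (\<xi> - z) - 1 / (a - z)) = cmod (\<xi> - a) / (cmod (\<xi> - z) * cmod (a - z))"
    by (simp add: divide_simps norm_divide norm_mult norm_minus_commute)
  also have "\<dots> \<le> cmod (\<xi> - a) / ((d / 2) * d)"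
    using assms \<open>d / 2 \<le> cmod (\<xi> - z)\<close>
    by (intro divide_left_mono mult_mono mult_pos_pos) auto
  finally show ?thesis
    by (simp add: power2_eq_square mult.commute)
qed

lemma kernel_approximable_at_limit_point:
  fixes K :: "real set" and F :: "complex set"
  assumes "compact K" "a islimpt F" "a \<notin> complex_of_real ` K"
    and bound: "\<And>t. t \<in> K \<Longrightarrow> cmod (g t) \<le> B"
    and approx: "\<And>\<xi>. \<xi> \<in> F \<Longrightarrow> \<xi> \<noteq> a \<Longrightarrow>
      kernel_approximable cauchy_kernel1 F K (\<lambda>t. cauchy_kernel1 \<xi> t * g t)"
  shows "kernel_approximable cauchy_kernel1 F K (\<lambda>t. cauchy_kernel1 a t * g t)"
proof (rule kernel_approximable_uniform_limit)
  obtain d where d: "d > 0" "\<And>t. t \<in> K \<Longrightarrow> d \<le> cmod (a - complex_of_real t)"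
    using real_compact_separated_from_point[OF assms(1,3)] by blast
  fix e :: real assume "e > 0"
  define C where "C = \<bar>B\<bar> + 1"
  have "C > 0" by (simp add: C_def add_nonneg_pos)
  define r where "r = min (d / 2) (e * d\<^sup>2 / (2 * C))"
  have "r > 0"
    using d(1) \<open>e > 0\<close> \<open>C > 0\<close> by (simp add: r_def)
  then obtain \<xi> where \<xi>: "\<xi> \<in> F" "\<xi> \<noteq> a" "cmod (\<xi> - a) < r"
    using assms(2) unfolding islimpt_approachable dist_norm by blast
  have "cmod (cauchy_kernel1 a t * g t - cauchy_kernel1 \<xi> t * g t) < e" if "t \<in> K" for t
  proof -
    have "cmod (cauchy_kernel1 a t * g t - cauchy_kernel1 \<xi> t * g t)
        = cmod (g t) * cmod (cauchy_kernel1 \<xi> t - cauchy_kernel1 a t)"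
      by (metis norm_minus_commute norm_mult left_diff_distrib mult.commute)
    also have "\<dots> \<le> C * (2 * cmod (\<xi> - a) / d\<^sup>2)"
      using bound[OF that] norm_recip_diff_le[OF d(1) d(2)[OF that]] \<xi>(3) d(1)
      by (intro mult_mono) (auto simp: C_def r_def)
    also have "\<dots> < C * (2 * (e * d\<^sup>2 / (2 * C)) / d\<^sup>2)"
      using \<xi>(3) d(1) \<open>C > 0\<close> by (intro mult_strict_left_mono divide_strict_right_mono) (auto simp: r_def)
    also have "\<dots> = e"
      using d(1) \<open>C > 0\<close> by simp
    finally show ?thesis .
  qed
  with approx[OF \<xi>(1,2)]
  show "\<exists>h. kernel_approximable cauchy_kernel1 F K h \<and>
      (\<forall>t\<in>K. cmod (cauchy_kernel1 a t * g t - h t) < e)"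
    by blast
qed

lemma kernel_approximable_partial_fractions_step:
  fixes K :: "real set" and F :: "complex set"
  assumes "a \<noteq> b" "a \<notin> complex_of_real ` K" "b \<notin> complex_of_real ` K"
    and "kernel_approximable cauchy_kernel1 F K (\<lambda>t. cauchy_kernel1 a t ^ Suc m * cauchy_kernel1 b t ^ n)"
    and "kernel_approximable cauchy_kernel1 F K (\<lambda>t. cauchy_kernel1 a t ^ m * cauchy_kernel1 b t ^ Suc n)"
  shows "kernel_approximable cauchy_kernel1 F K (\<lambda>t. cauchy_kernel1 a t ^ Suc m * cauchy_kernel1 b t ^ Suc n)"
proof -
  have "kernel_approximable cauchy_kernel1 F K (\<lambda>t. 1 / (b - a) *
      (cauchy_kernel1 a t ^ Suc m * cauchy_kernel1 b t ^ n - cauchy_kernel1 a t ^ m * cauchy_kernel1 b t ^ Suc n))"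
    using assms(4,5) by (intro kernel_approximable_cmult kernel_approximable_diff)
  then show ?thesis
  proof (rule kernel_approximable_cong)
    fix t assume "t \<in> K"
    then have "a \<noteq> complex_of_real t" "b \<noteq> complex_of_real t"
      using assms(2,3) by auto
    then have "cauchy_kernel1 a t * cauchy_kernel1 b t = 1 / (b - a) * (cauchy_kernel1 a t - cauchy_kernel1 b t)"
      using assms(1) by (intro cauchy_kernel1_mult)
    then show "1 / (b - a) * (cauchy_kernel1 a t ^ Suc m * cauchy_kernel1 b t ^ n
        - cauchy_kernel1 a t ^ m * cauchy_kernel1 b t ^ Suc n)
        = cauchy_kernel1 a t ^ Suc m * cauchy_kernel1 b t ^ Suc n"
      by (rule partial_fractions_power_step)
  qed
qed

lemma kernel_approximable_recip_power:
  fixes K :: "real set" and F :: "complex set"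
  assumes "compact K" "a islimpt F" "a \<notin> complex_of_real ` K"
    and KF: "\<And>t. t \<in> K \<Longrightarrow> complex_of_real t \<notin> F"
  shows "kernel_approximable cauchy_kernel1 F K (\<lambda>t. cauchy_kernel1 a t ^ Suc n)"
proof -
  obtain d where d: "d > 0" "\<And>t. t \<in> K \<Longrightarrow> d \<le> cmod (a - complex_of_real t)"
    using real_compact_separated_from_point[OF assms(1,3)] by blast
  have bound: "cmod (cauchy_kernel1 a t ^ n) \<le> (1 / d) ^ n" if "t \<in> K" for t n
    using d(1) d(2)[OF that] by (auto simp: norm_power norm_divide intro!: power_mono frac_le)
  have power: "kernel_approximable cauchy_kernel1 F K (\<lambda>t. cauchy_kernel1 a t ^ Suc n)"
    if "\<And>\<xi>. \<xi> \<in> F \<Longrightarrow> \<xi> \<noteq> a \<Longrightarrow>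
      kernel_approximable cauchy_kernel1 F K (\<lambda>t. cauchy_kernel1 \<xi> t ^ Suc 0 * cauchy_kernel1 a t ^ n)" for n
    using kernel_approximable_at_limit_point[OF assms(1-3) bound] that by simp
  have "kernel_approximable cauchy_kernel1 F K (\<lambda>t. cauchy_kernel1 \<xi> t ^ Suc 0 * cauchy_kernel1 a t ^ n)"
    if "\<xi> \<in> F" "\<xi> \<noteq> a" for \<xi> n
    using that
  proof (induction n arbitrary: \<xi>)
    case 0
    then show ?case
      using kernel_approximable_kernel[of \<xi> F cauchy_kernel1 K] by simp
  next
    case (Suc n)
    have "\<xi> \<notin> complex_of_real ` K"
      using KF Suc.prems(1) by auto
    with Suc power[of n] show ?case
      by (intro kernel_approximable_partial_fractions_step assms(3)) auto
  qed
  then show ?thesis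
    using power by blast
qed

lemma kernel_approximable_recip_monomial:
  fixes K :: "real set" and F :: "complex set"
  assumes a: "\<And>n. kernel_approximable cauchy_kernel1 F K (\<lambda>t. cauchy_kernel1 a t ^ Suc n)"
    and b: "\<And>n. kernel_approximable cauchy_kernel1 F K (\<lambda>t. cauchy_kernel1 b t ^ Suc n)"
    and aK: "a \<notin> complex_of_real ` K" and bK: "b \<notin> complex_of_real ` K"
  shows "1 \<le> m + n \<Longrightarrow>
    kernel_approximable cauchy_kernel1 F K (\<lambda>t. cauchy_kernel1 a t ^ m * cauchy_kernel1 b t ^ n)"
proof (induction "m + n" arbitrary: m n rule: less_induct)
  case less
  consider "m = 0" | "n = 0" | m' n' where "m = Suc m'" "n = Suc n'"
    by (meson not0_implies_Suc)
  then show ?case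
  proof cases
    case 1
    with less.prems obtain n' where "n = Suc n'" by (cases n) auto
    with 1 show ?thesis using b by simp
  next
    case 2
    with less.prems obtain m' where "m = Suc m'" by (cases m) auto
    with 2 show ?thesis using a by simp
  next
    case 3
    show ?thesis
    proof (cases "a = b")
      case True
      with a[of "m' + n"] show ?thesis
        by (simp add: 3 power_add)
    next
      case False
      with less.hyps[of m n'] less.hyps[of m' n] show ?thesis
        unfolding 3 by (intro kernel_approximable_partial_fractions_step aK bK) auto
    qed
  qed
qed

inductive cnj_poly_vanishing_at_0 :: "(complex \<Rightarrow> complex) \<Rightarrow> bool" where
  monomial: "1 \<le> m + n \<Longrightarrow> cnj_poly_vanishing_at_0 (\<lambda>z. z ^ m * cnj z ^ n)"
| add: "cnj_poly_vanishing_at_0 p \<Longrightarrow> cnj_poly_vanishing_at_0 q \<Longrightarrow>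
    cnj_poly_vanishing_at_0 (\<lambda>z. p z + q z)"
| cmult: "cnj_poly_vanishing_at_0 p \<Longrightarrow> cnj_poly_vanishing_at_0 (\<lambda>z. c * p z)"

lemma cnj_poly_vanishing_at_0_zero: "cnj_poly_vanishing_at_0 (\<lambda>z. 0)"
  using cnj_poly_vanishing_at_0.cmult[OF cnj_poly_vanishing_at_0.monomial[of 1 0], of 0] by simp

lemma cnj_poly_vanishing_at_0_mult_monomial:
  assumes "cnj_poly_vanishing_at_0 p"
  shows "cnj_poly_vanishing_at_0 (\<lambda>z. z ^ m * cnj z ^ n * p z)"
  using assms
proof induction
  case (monomial m' n')
  then show ?case
    using cnj_poly_vanishing_at_0.monomial[of "m + m'" "n + n'"]
    by (simp add: power_add algebra_simps)
next
  case (add p q)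
  then show ?case
    using cnj_poly_vanishing_at_0.add by (simp add: distrib_left)
next
  case (cmult p c)
  then show ?case
    using cnj_poly_vanishing_at_0.cmult[of _ c] by (simp add: mult.left_commute)
qed

lemma cnj_poly_vanishing_at_0_mult:
  assumes "cnj_poly_vanishing_at_0 p" "cnj_poly_vanishing_at_0 q"
  shows "cnj_poly_vanishing_at_0 (\<lambda>z. p z * q z)"
  using assms(1)
proof induction
  case (monomial m n)
  then show ?case
    using cnj_poly_vanishing_at_0_mult_monomial[OF assms(2)] by simp
next
  case (add p q)
  then show ?case
    using cnj_poly_vanishing_at_0.add by (simp add: distrib_right)
next
  case (cmult p c)
  then show ?case
    using cnj_poly_vanishing_at_0.cmult[of _ c] by (simp add: mult.assoc)
qed

lemma cnj_poly_vanishing_at_0_real_polynomial_function: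
  fixes P :: "complex \<Rightarrow> real"
  assumes "real_polynomial_function P"
  shows "cnj_poly_vanishing_at_0 (\<lambda>z. complex_of_real (P z - P 0))"
  using assms
proof induction
  case (linear P)
  then have "linear P"
    by (rule bounded_linear.linear)
  have P_eq: "P z = Re z * P 1 + Im z * P \<i>" for z
  proof -
    have "P z = P (Re z *\<^sub>R 1 + Im z *\<^sub>R \<i>)"
      by (rule arg_cong[of _ _ P]) (simp add: complex_eq_iff)
    also have "\<dots> = Re z * P 1 + Im z * P \<i>"
      using \<open>linear P\<close> by (simp add: linear_add linear_scale)
    finally show ?thesis .
  qed
  define c1 where "c1 = (P 1 - \<i> * P \<i>) / 2"
  define c2 where "c2 = (P 1 + \<i> * P \<i>) / 2"
  have "(\<lambda>z. complex_of_real (P z - P 0)) = (\<lambda>z. c1 * (z ^ 1 * cnj z ^ 0) + c2 * (z ^ 0 * cnj z ^ 1))"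
  proof
    fix z
    show "complex_of_real (P z - P 0) = c1 * (z ^ 1 * cnj z ^ 0) + c2 * (z ^ 0 * cnj z ^ 1)"
      using P_eq[of z] P_eq[of 0] by (simp add: complex_eq_iff c1_def c2_def field_simps)
  qed
  then show ?case
    by (simp only:) (intro cnj_poly_vanishing_at_0.intros; simp)
next
  case (const c)
  then show ?case
    using cnj_poly_vanishing_at_0_zero by simp
next
  case (add f g)
  have "cnj_poly_vanishing_at_0 (\<lambda>z. complex_of_real (f z - f 0) + complex_of_real (g z - g 0))"
    using add.IH by (rule cnj_poly_vanishing_at_0.add)
  then show ?case
    by (simp add: algebra_simps)
next
  case (mult f g)
  have "cnj_poly_vanishing_at_0 (\<lambda>z. complex_of_real (f z - f 0) * complex_of_real (g z - g 0)
      + (f 0 * complex_of_real (g z - g 0) + g 0 * complex_of_real (f z - f 0)))"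
    using mult.IH
    by (intro cnj_poly_vanishing_at_0.add cnj_poly_vanishing_at_0.cmult cnj_poly_vanishing_at_0_mult)
  then show ?case
    by (simp add: algebra_simps)
qed

lemma kernel_approximable_cnj_poly:
  fixes K :: "real set" and F :: "complex set"
  assumes K: "compact K" and "a \<in> F" and a: "a islimpt F" and cnj_a: "cnj a islimpt F"
    and KF: "\<And>t. t \<in> K \<Longrightarrow> complex_of_real t \<notin> F"
    and "cnj_poly_vanishing_at_0 p"
  shows "kernel_approximable cauchy_kernel1 F K (\<lambda>t. p (cauchy_kernel1 a t))"
proof -
  have aK: "a \<notin> complex_of_real ` K"
    using KF \<open>a \<in> F\<close> by auto
  then have cnj_aK: "cnj a \<notin> complex_of_real ` K"
    by (metis (no_types, lifting) complex_cnj_cnj complex_cnj_complex_of_real image_iff)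
  note recip_monomial = kernel_approximable_recip_monomial[OF
      kernel_approximable_recip_power[OF K a aK KF] kernel_approximable_recip_power[OF K cnj_a cnj_aK KF]
      aK cnj_aK]
  from \<open>cnj_poly_vanishing_at_0 p\<close> show ?thesis
  proof induction
    case (monomial m n)
    then show ?case
      using recip_monomial[of m n] by simp
  next
    case (add p q)
    from add.IH show ?case by (rule kernel_approximable_add)
  next
    case (cmult p c)
    from cmult.IH show ?case by (rule kernel_approximable_cmult)
  qed
qed

lemma continuous_on_insert_if:
  fixes S :: "'a::t1_space set"
  assumes "closed S" "c \<notin> S" "continuous_on S g"
  shows "continuous_on (insert c S) (\<lambda>z. if z = c then d else g z)"
proof -
  have "continuous_on S (\<lambda>z. if z = c then d else g z)"
    using assms(3) by (rule continuous_on_eq) (use assms(2) in auto)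
  then have "continuous_on ({c} \<union> S) (\<lambda>z. if z = c then d else g z)"
    using assms(1) by (intro continuous_on_closed_Un) auto
  then show ?thesis
    by simp
qed

lemma cauchy_kernel1_approximable:
  fixes K :: "real set" and F :: "complex set" and f :: "real \<Rightarrow> real"
  assumes K: "compact K" and "a \<in> F" and a: "a islimpt F" and cnj_a: "cnj a islimpt F"
    and KF: "\<And>t. t \<in> K \<Longrightarrow> complex_of_real t \<notin> F"
    and f: "continuous_on K f"
  shows "kernel_approximable cauchy_kernel1 F K (\<lambda>t. complex_of_real (f t))"
proof (rule kernel_approximable_uniform_limit)
  define s where "s = cauchy_kernel1 a"
  have s_nonzero: "s t \<noteq> 0" and s_inverse: "Re (a - 1 / s t) = t" if "t \<in> K" for t
    using KF \<open>a \<in> F\<close> that by (auto simp: s_def)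
  have "continuous_on K s"
    using KF \<open>a \<in> F\<close> unfolding s_def by (intro continuous_intros) auto
  then have "compact (s ` K)"
    using K by (rule compact_continuous_image)
  define \<phi> where "\<phi> z = (if z = 0 then 0 else f (Re (a - 1 / z)))" for z
  have "continuous_on (s ` K) (\<lambda>z. f (Re (a - 1 / z)))"
    using s_nonzero s_inverse
    by (intro continuous_on_compose2[OF f]) (auto intro!: continuous_intros)
  then have "continuous_on (insert 0 (s ` K)) \<phi>"
    unfolding \<phi>_def using \<open>compact (s ` K)\<close> s_nonzero
    by (intro continuous_on_insert_if compact_imp_closed) auto
  fix e :: real assume "e > 0"
  then obtain P where P: "real_polynomial_function P"
      "\<And>z. z \<in> insert 0 (s ` K) \<Longrightarrow> \<bar>\<phi> z - P z\<bar> < e / 2"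
    using Stone_Weierstrass_real_polynomial_function[OF _ \<open>continuous_on (insert 0 (s ` K)) \<phi>\<close>]
      \<open>compact (s ` K)\<close> by (metis compact_insert half_gt_zero)
  have "kernel_approximable cauchy_kernel1 F K (\<lambda>t. complex_of_real (P (s t) - P 0))"
    unfolding s_def using assms(1-5) cnj_poly_vanishing_at_0_real_polynomial_function[OF P(1)]
    by (rule kernel_approximable_cnj_poly)
  moreover have "cmod (complex_of_real (f t) - complex_of_real (P (s t) - P 0)) < e" if "t \<in> K" for t
  proof -
    have "\<phi> (s t) = f t" "\<phi> 0 = 0"
      using s_nonzero[OF that] s_inverse[OF that] by (auto simp: \<phi>_def)
    then show ?thesis
      using P(2)[of 0] P(2)[of "s t"] that by (simp flip: of_real_diff) (smt (verit))
  qed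
  ultimately show "\<exists>g. kernel_approximable cauchy_kernel1 F K g \<and>
      (\<forall>t\<in>K. cmod (complex_of_real (f t) - g t) < e)"
    by blast
qed

section \<open>Boundaries of closures of open sets\<close>

lemma frontier_closure_disjoint_open:
  assumes "open U"
  shows "frontier (closure U) \<inter> U = {}"
  using interior_maximal[OF closure_subset assms] by (auto simp: frontier_def)

text \<open>An isolated boundary point would have a punctured neighbourhood that, being connected,
  lies either in the interior of \<open>closure U\<close> or outside \<open>closure U\<close>; neither is possible.\<close>
lemma islimpt_frontier_closure:
  fixes U :: "'a::euclidean_space set"
  assumes "2 \<le> DIM('a)" "open U" and p: "p \<in> frontier (closure U)"
  shows "p islimpt frontier (closure U)"
proof (rule ccontr)
  assume "\<not> p islimpt frontier (closure U)"
  then obtain r where "r > 0" and r: "\<And>x. x \<in> ball p r - {p} \<Longrightarrow> x \<notin> frontier (closure U)"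
    unfolding islimpt_approachable by (auto simp: dist_commute)
  define B where "B = ball p r - {p}"
  have B: "B \<subseteq> interior (closure U) \<union> - closure U"
    using r unfolding B_def frontier_def by auto
  then have "interior (closure U) \<inter> B = {} \<or> - closure U \<inter> B = {}"
    using connected_punctured_ball[OF assms(1)] unfolding B_def
    by (intro connectedD) (auto dest: interior_subset[THEN subsetD])
  then show False
  proof
    assume "interior (closure U) \<inter> B = {}"
    have "p islimpt closure U"
      using p assms(2) by (intro islimpt_closure_open[of U]) (auto simp: frontier_def)
    then obtain x where "x \<in> closure U" "x \<in> B"
      using \<open>r > 0\<close> unfolding islimpt_approachable B_def by (auto simp: dist_commute)
    then show False
      using B \<open>interior (closure U) \<inter> B = {}\<close> by blast
  next
    assume "- closure U \<inter> B = {}"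
    then have "ball p r \<subseteq> closure U"
      using p unfolding B_def frontier_def by auto
    then have "p \<in> interior (closure U)"
      using \<open>r > 0\<close> by (intro interior_maximal[THEN subsetD, of "ball p r"]) auto
    then show False
      using p by (auto simp: frontier_def)
  qed
qed

lemma frontier_injective_linear_image:
  fixes f :: "'a::euclidean_space \<Rightarrow> 'a"
  assumes "linear f" "inj f"
  shows "f ` frontier S = frontier (f ` S)"
  using assms by (simp add: frontier_def image_set_diff closure_injective_linear_image
      interior_injective_linear_image)

lemma cnj_in_frontier_closure:
  assumes "\<And>z. z \<in> U \<Longrightarrow> cnj z \<in> U" "z \<in> frontier (closure U)"
  shows "cnj z \<in> frontier (closure U)"
proof -
  have "inj cnj"
    by (metis injI complex_cnj_cnj)
  have "cnj ` U = U"
    using assms(1) by (auto simp: image_iff) (metis complex_cnj_cnj)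
  then have "cnj ` frontier (closure U) = frontier (closure U)"
    using linear_cnj \<open>inj cnj\<close>
    by (simp add: frontier_injective_linear_image closure_injective_linear_image)
  then show ?thesis
    using assms(2) by blast
qed

section \<open>Several variables\<close>

lemma kernel_comb_conv_sum_nth:
  "kernel_comb kern L t = (\<Sum>k<length L. fst (L ! k) * kern (snd (L ! k)) t)"
  by (simp add: kernel_comb_def sum_list_sum_nth atLeast0LessThan case_prod_beta)

lemma prod_kernel_comb_cauchy_kernel1:
  fixes Ls :: "'n::finite \<Rightarrow> (complex \<times> complex) list"
  obtains L where "snd ` set L \<subseteq> prod_set_complex (\<lambda>i. snd ` set (Ls i))"
    and "\<And>x. (\<Prod>i\<in>UNIV. kernel_comb cauchy_kernel1 (Ls i) (x $ i)) = kernel_comb cauchy_kernel L x"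
proof -
  define H where "H = PiE UNIV (\<lambda>i. {..<length (Ls i)})"
  have "finite H"
    by (simp add: H_def finite_PiE)
  then obtain hs where hs: "set hs = H" "distinct hs"
    using finite_distinct_list by blast
  define L where "L = map (\<lambda>h. (\<Prod>i\<in>UNIV. fst (Ls i ! h i), \<chi> i. snd (Ls i ! h i))) hs"
  show thesis
  proof
    show "snd ` set L \<subseteq> prod_set_complex (\<lambda>i. snd ` set (Ls i))"
      by (auto simp: L_def hs H_def prod_set_complex_def PiE_iff)
  next
    fix x :: "real ^ 'n"
    have "(\<Prod>i\<in>UNIV. kernel_comb cauchy_kernel1 (Ls i) (x $ i))
        = (\<Sum>h\<in>H. \<Prod>i\<in>UNIV. fst (Ls i ! h i) * cauchy_kernel1 (snd (Ls i ! h i)) (x $ i))"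
      unfolding kernel_comb_conv_sum_nth H_def by (rule prod_sum_PiE) auto
    also have "\<dots> = (\<Sum>h\<in>H. (\<Prod>i\<in>UNIV. fst (Ls i ! h i)) * cauchy_kernel (\<chi> i. snd (Ls i ! h i)) x)"
      by (intro sum.cong refl) (simp only: cauchy_kernel_def vec_lambda_beta prod.distrib)
    also have "\<dots> = (\<Sum>h\<leftarrow>hs. (\<Prod>i\<in>UNIV. fst (Ls i ! h i)) * cauchy_kernel (\<chi> i. snd (Ls i ! h i)) x)"
      unfolding hs(1)[symmetric] by (rule sum.distinct_set_conv_list[OF hs(2)])
    also have "\<dots> = kernel_comb cauchy_kernel L x"
      by (simp add: kernel_comb_def L_def o_def)
    finally show "(\<Prod>i\<in>UNIV. kernel_comb cauchy_kernel1 (Ls i) (x $ i)) = kernel_comb cauchy_kernel L x" .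
  qed
qed

lemma norm_prod_diff_le:
  fixes p q :: "'i \<Rightarrow> 'a::real_normed_field" and B \<delta> :: real
  assumes "B \<ge> 0" "\<delta> \<le> 1" "\<And>i. i \<in> I \<Longrightarrow> norm (p i) \<le> B" "\<And>i. i \<in> I \<Longrightarrow> norm (p i - q i) \<le> \<delta>"
  shows "norm ((\<Prod>i\<in>I. p i) - (\<Prod>i\<in>I. q i)) \<le> (B + 1) ^ card I * (card I * \<delta>)"
proof -
  define C where "C = B + 1"
  have "C \<ge> 1" using assms(1) by (simp add: C_def)
  have p: "norm (p i) \<le> C" if "i \<in> I" for i
    using assms(3)[OF that] by (simp add: C_def)
  have q: "norm (q i) \<le> C" if "i \<in> I" for i
    using norm_triangle_ineq2[of "q i" "p i"] assms(2) assms(3,4)[OF that]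
    by (simp add: C_def norm_minus_commute)
  have "norm ((\<Prod>i\<in>I. p i / of_real C) - (\<Prod>i\<in>I. q i / of_real C))
      \<le> (\<Sum>i\<in>I. norm (p i / of_real C - q i / of_real C))"
    using p q \<open>C \<ge> 1\<close> by (intro norm_prod_diff) (auto simp: norm_divide)
  also have "\<dots> \<le> (\<Sum>i\<in>I. norm (p i - q i))"
    using \<open>C \<ge> 1\<close>
    by (intro sum_mono) (simp add: norm_divide divide_le_eq mult_le_cancel_left1 flip: diff_divide_distrib)
  also have "\<dots> \<le> card I * \<delta>"
    using assms(4) by (rule sum_bounded_above)
  finally have "C ^ card I * norm ((\<Prod>i\<in>I. p i / of_real C) - (\<Prod>i\<in>I. q i / of_real C))
      \<le> C ^ card I * (card I * \<delta>)"
    using \<open>C \<ge> 1\<close> by (intro mult_left_mono) auto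
  moreover have "(\<Prod>i\<in>I. p i) - (\<Prod>i\<in>I. q i)
      = of_real (C ^ card I) * ((\<Prod>i\<in>I. p i / of_real C) - (\<Prod>i\<in>I. q i / of_real C))"
    using \<open>C \<ge> 1\<close> by (simp add: prod_dividef right_diff_distrib)
  ultimately show ?thesis
    using \<open>C \<ge> 1\<close> by (simp add: norm_mult norm_power C_def)
qed

lemma kernel_approximable_prod:
  fixes Ms :: "'n::finite \<Rightarrow> real set" and Fs :: "'n \<Rightarrow> complex set" and h :: "'n \<Rightarrow> real \<Rightarrow> complex"
  assumes bounded: "\<And>i. bounded (h i ` Ms i)"
    and approx: "\<And>i. kernel_approximable cauchy_kernel1 (Fs i) (Ms i) (h i)"
  shows "kernel_approximable cauchy_kernel (prod_set_complex Fs) (prod_set_real Ms)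
    (\<lambda>x. \<Prod>i\<in>UNIV. h i (x $ i))"
  unfolding kernel_approximable_def
proof (intro allI impI)
  obtain B where "B > 0" and B: "\<And>i t. t \<in> Ms i \<Longrightarrow> cmod (h i t) \<le> B"
    using bounded_UN[of UNIV "\<lambda>i. h i ` Ms i"] bounded unfolding bounded_pos by force
  define n where "n = CARD('n)"
  fix e :: real assume "e > 0"
  define \<delta> where "\<delta> = min 1 (e / ((B + 1) ^ n * (n + 1)))"
  have "(B + 1) ^ n > 0" using \<open>B > 0\<close> by simp
  then have "\<delta> > 0" "\<delta> \<le> 1"
    using \<open>e > 0\<close> by (auto simp: \<delta>_def)
  have "(B + 1) ^ n * (n * \<delta>) \<le> (B + 1) ^ n * (n * (e / ((B + 1) ^ n * (n + 1))))"
    using \<open>(B + 1) ^ n > 0\<close> by (intro mult_left_mono) (auto simp: \<delta>_def)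
  also have "\<dots> = e * (n / (n + 1))"
    using \<open>B > 0\<close> by (simp add: divide_simps)
  also have "\<dots> < e"
    using \<open>e > 0\<close> by (simp add: field_simps)
  finally have "(B + 1) ^ n * (n * \<delta>) < e" .
  have "\<forall>i. \<exists>L. snd ` set L \<subseteq> Fs i \<and> (\<forall>t\<in>Ms i. cmod (h i t - kernel_comb cauchy_kernel1 L t) < \<delta>)"
    using approx \<open>\<delta> > 0\<close> unfolding kernel_approximable_def by blast
  then obtain Ls where Ls: "\<And>i. snd ` set (Ls i) \<subseteq> Fs i"
    "\<And>i t. t \<in> Ms i \<Longrightarrow> cmod (h i t - kernel_comb cauchy_kernel1 (Ls i) t) < \<delta>"
    by metis
  obtain L where L: "snd ` set L \<subseteq> prod_set_complex (\<lambda>i. snd ` set (Ls i))"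
    "\<And>x. (\<Prod>i\<in>UNIV. kernel_comb cauchy_kernel1 (Ls i) (x $ i)) = kernel_comb cauchy_kernel L x"
    using prod_kernel_comb_cauchy_kernel1[of Ls] by blast
  have "cmod ((\<Prod>i\<in>UNIV. h i (x $ i)) - kernel_comb cauchy_kernel L x) < e"
    if "x \<in> prod_set_real Ms" for x
  proof -
    have x: "x $ i \<in> Ms i" for i
      using that by (simp add: prod_set_real_def)
    have "cmod ((\<Prod>i\<in>UNIV. h i (x $ i)) - (\<Prod>i\<in>UNIV. kernel_comb cauchy_kernel1 (Ls i) (x $ i)))
        \<le> (B + 1) ^ n * (n * \<delta>)"
      unfolding n_def using B[OF x] Ls(2)[OF x] \<open>B > 0\<close> \<open>\<delta> \<le> 1\<close>
      by (intro norm_prod_diff_le) (auto intro: less_imp_le)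
    then show ?thesis
      using L(2) \<open>(B + 1) ^ n * (n * \<delta>) < e\<close> by simp
  qed
  moreover have "snd ` set L \<subseteq> prod_set_complex Fs"
    using L(1) Ls(1) by (fastforce simp: prod_set_complex_def)
  ultimately show "\<exists>L. snd ` set L \<subseteq> prod_set_complex Fs \<and>
      (\<forall>x\<in>prod_set_real Ms. cmod ((\<Prod>i\<in>UNIV. h i (x $ i)) - kernel_comb cauchy_kernel L x) < e)"
    by blast
qed

inductive separable_fun :: "(real ^ 'n::finite \<Rightarrow> real) \<Rightarrow> bool" where
  prod: "(\<And>i. continuous_on UNIV (p i)) \<Longrightarrow> separable_fun (\<lambda>x. c * (\<Prod>i\<in>UNIV. p i (x $ i)))"
| add: "separable_fun f \<Longrightarrow> separable_fun g \<Longrightarrow> separable_fun (\<lambda>x. f x + g x)"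

lemma separable_fun_const: "separable_fun (\<lambda>x. c)"
  using separable_fun.prod[of "\<lambda>i t. 1" c] by simp

lemma separable_fun_component: "separable_fun (\<lambda>x. x $ j)"
proof -
  have "continuous_on UNIV (\<lambda>t :: real. if i = j then t else 1)" for i
    by (cases "i = j") auto
  then have "separable_fun (\<lambda>x. 1 * (\<Prod>i\<in>UNIV. if i = j then x $ i else 1))"
    by (rule separable_fun.prod)
  then show ?thesis
    by simp
qed

lemma separable_fun_mult_prod:
  assumes "separable_fun g" "\<And>i. continuous_on UNIV (p i)"
  shows "separable_fun (\<lambda>x. c * (\<Prod>i\<in>UNIV. p i (x $ i)) * g x)"
  using assms(1)
proof induction
  case (prod q d)
  have "separable_fun (\<lambda>x. (c * d) * (\<Prod>i\<in>UNIV. p i (x $ i) * q i (x $ i)))"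
    using assms(2) prod by (intro separable_fun.prod continuous_intros)
  then show ?case
    by (simp add: prod.distrib algebra_simps)
next
  case (add f g)
  then show ?case
    using separable_fun.add by (simp add: distrib_left)
qed

lemma separable_fun_mult:
  assumes "separable_fun f" "separable_fun g"
  shows "separable_fun (\<lambda>x. f x * g x)"
  using assms(1)
proof induction
  case (prod p c)
  then show ?case
    using separable_fun_mult_prod[OF assms(2)] by simp
next
  case (add f1 f2)
  then show ?case
    using separable_fun.add by (simp add: distrib_right)
qed

lemma continuous_on_separable_fun:
  assumes "separable_fun f"
  shows "continuous_on UNIV f"
  using assms
proof induction
  case (prod p c)
  have "continuous_on UNIV (\<lambda>x. p i (x $ i))" for i
    by (rule continuous_on_compose2[OF prod continuous_on_component[OF continuous_on_id]]) auto
  then show ?case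
    by (intro continuous_on_mult continuous_on_const continuous_on_prod)
next
  case (add f g)
  from add.IH show ?case
    by (rule continuous_on_add)
qed

lemma kernel_approximable_separable_fun:
  fixes Ms :: "'n::finite \<Rightarrow> real set" and Fs :: "'n \<Rightarrow> complex set"
  assumes compact: "\<And>i. compact (Ms i)"
    and one_dim: "\<And>i p. continuous_on (Ms i) p \<Longrightarrow>
      kernel_approximable cauchy_kernel1 (Fs i) (Ms i) (\<lambda>t. complex_of_real (p t))"
    and "separable_fun f"
  shows "kernel_approximable cauchy_kernel (prod_set_complex Fs) (prod_set_real Ms)
    (\<lambda>x. complex_of_real (f x))"
  using assms(3)
proof induction
  case (prod p c)
  then have cont: "continuous_on (Ms i) (\<lambda>t. complex_of_real (p i t))" for i
    by (blast intro: continuous_on_subset continuous_on_of_real)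
  have "kernel_approximable cauchy_kernel (prod_set_complex Fs) (prod_set_real Ms)
      (\<lambda>x. \<Prod>i\<in>UNIV. complex_of_real (p i (x $ i)))"
  proof (rule kernel_approximable_prod)
    show "bounded ((\<lambda>t. complex_of_real (p i t)) ` Ms i)" for i
      using compact_continuous_image[OF cont compact] by (rule compact_imp_bounded)
    show "kernel_approximable cauchy_kernel1 (Fs i) (Ms i) (\<lambda>t. complex_of_real (p i t))" for i
      using prod by (blast intro: one_dim continuous_on_subset)
  qed
  then show ?case
    using kernel_approximable_cmult[of _ _ _ _ "of_real c"] by simp
next
  case (add f g)
  from add.IH have "kernel_approximable cauchy_kernel (prod_set_complex Fs) (prod_set_real Ms)
      (\<lambda>x. complex_of_real (f x) + complex_of_real (g x))"
    by (rule kernel_approximable_add)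
  then show ?case
    by simp
qed

lemma compact_prod_set_real_factor:
  assumes "compact (prod_set_real Ms)" "prod_set_real Ms \<noteq> {}"
  shows "compact (Ms i)"
proof -
  obtain x0 where x0: "x0 \<in> prod_set_real Ms"
    using assms(2) by blast
  have "Ms i \<subseteq> (\<lambda>x. x $ i) ` prod_set_real Ms"
  proof
    fix t assume "t \<in> Ms i"
    then have "(\<chi> j. if j = i then t else x0 $ j) \<in> prod_set_real Ms"
      using x0 by (simp add: prod_set_real_def)
    then show "t \<in> (\<lambda>x. x $ i) ` prod_set_real Ms"
      by (rule rev_image_eqI) simp
  qed
  moreover have "(\<lambda>x. x $ i) ` prod_set_real Ms \<subseteq> Ms i"
    by (auto simp: prod_set_real_def)
  moreover have "compact ((\<lambda>x. x $ i) ` prod_set_real Ms)"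
    using assms(1) by (intro compact_continuous_image continuous_on_component continuous_on_id)
  ultimately show ?thesis
    by (metis subset_antisym)
qed

lemma separable_fun_dense:
  fixes f :: "real ^ 'n::finite \<Rightarrow> real"
  assumes "compact S" "continuous_on S f" "e > 0"
  shows "\<exists>g. separable_fun g \<and> (\<forall>x\<in>S. \<bar>f x - g x\<bar> < e)"
proof (rule Stone_Weierstrass_HOL[OF assms(1)])
  show "separable_fun g \<Longrightarrow> continuous_on S g" for g
    by (blast intro: continuous_on_subset continuous_on_separable_fun)
  show "\<exists>g. separable_fun g \<and> g x \<noteq> g y" if xy: "x \<in> S \<and> y \<in> S \<and> x \<noteq> y" for x y
  proof -
    obtain i where "x $ i \<noteq> y $ i"
      using xy by (metis vec_eq_iff)
    then show ?thesis
      using separable_fun_component[of i] by blast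
  qed
  show "separable_fun (\<lambda>x. c)" for c
    by (rule separable_fun_const)
  show "separable_fun (\<lambda>x. g x + h x)" if "separable_fun g \<and> separable_fun h" for g h
    using that by (blast intro: separable_fun.add)
  show "separable_fun (\<lambda>x. g x * h x)" if "separable_fun g \<and> separable_fun h" for g h
    using that by (blast intro: separable_fun_mult)
qed (fact assms(2,3))+

lemma cauchy_kernel_approximable:
  fixes Ms :: "'n::finite \<Rightarrow> real set" and Fs :: "'n \<Rightarrow> complex set" and f :: "real ^ 'n \<Rightarrow> real"
  assumes M: "compact (prod_set_real Ms)"
    and limit_point: "\<And>i. \<exists>a\<in>Fs i. a islimpt Fs i \<and> cnj a islimpt Fs i"
    and disjoint: "\<And>i t. t \<in> Ms i \<Longrightarrow> complex_of_real t \<notin> Fs i"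
    and f: "continuous_on (prod_set_real Ms) f"
  shows "kernel_approximable cauchy_kernel (prod_set_complex Fs) (prod_set_real Ms)
    (\<lambda>x. complex_of_real (f x))"
proof (cases "prod_set_real Ms = {}")
  case True
  then show ?thesis
    unfolding kernel_approximable_def by (intro allI impI exI[of _ "[]"]) auto
next
  case False
  then have compact: "compact (Ms i)" for i
    using M compact_prod_set_real_factor by blast
  have one_dim: "kernel_approximable cauchy_kernel1 (Fs i) (Ms i) (\<lambda>t. complex_of_real (p t))"
    if "continuous_on (Ms i) p" for i p
    using limit_point[of i] cauchy_kernel1_approximable[OF compact _ _ _ disjoint that] by blast
  show ?thesis
  proof (rule kernel_approximable_uniform_limit)
    fix e :: real assume "e > 0"
    then obtain g where g: "separable_fun g" "\<forall>x\<in>prod_set_real Ms. \<bar>f x - g x\<bar> < e"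
      using separable_fun_dense[OF M f] by blast
    have "kernel_approximable cauchy_kernel (prod_set_complex Fs) (prod_set_real Ms)
        (\<lambda>x. complex_of_real (g x))"
      using compact one_dim g(1) by (rule kernel_approximable_separable_fun)
    moreover have "\<forall>x\<in>prod_set_real Ms. cmod (complex_of_real (f x) - complex_of_real (g x)) < e"
      using g(2) by (simp flip: of_real_diff)
    ultimately show "\<exists>h. kernel_approximable cauchy_kernel (prod_set_complex Fs) (prod_set_real Ms) h \<and>
        (\<forall>x\<in>prod_set_real Ms. cmod (complex_of_real (f x) - h x) < e)"
      by blast
  qed
qed

lemma kernel_approximable_imp_indexed_sum:
  assumes "kernel_approximable kern F K h" "\<xi>0 \<in> F" "e > 0"
  shows "\<exists>m\<ge>1. \<exists>\<theta> :: nat \<Rightarrow> complex. \<exists>\<xi>. (\<forall>k\<in>{1..m}. \<xi> k \<in> F) \<and>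
    (\<forall>x\<in>K. cmod (h x - (\<Sum>k=1..m. \<theta> k * kern (\<xi> k) x)) < e)"
proof -
  obtain L where L: "snd ` set L \<subseteq> F" "\<forall>x\<in>K. cmod (h x - kernel_comb kern L x) < e"
    using assms(1,3) unfolding kernel_approximable_def by blast
  text \<open>A zero term in front makes the sum nonempty.\<close>
  define L' where "L' = (0, \<xi>0) # L"
  have "kernel_comb kern L' x = (\<Sum>k=1..length L'. fst (L' ! (k - 1)) * kern (snd (L' ! (k - 1))) x)" for x
    by (simp add: kernel_comb_conv_sum_nth sum.atLeast1_atMost_eq)
  moreover have "kernel_comb kern L' x = kernel_comb kern L x" for x
    by (simp add: L'_def)
  moreover have "snd (L' ! (k - 1)) \<in> F" if "k \<in> {1..length L'}" for k
    using that L(1) assms(2) nth_mem[of "k - 1" L'] by (force simp: L'_def)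
  ultimately show ?thesis
    using L(2) by (intro exI[of _ "length L'"] exI[of _ "\<lambda>k. fst (L' ! (k - 1))"]
        exI[of _ "\<lambda>k. snd (L' ! (k - 1))"] conjI) (auto simp: L'_def)
qed

theorem theorem2:
  fixes Ms :: "'n::finite \<Rightarrow> real set"
    and Us :: "'n \<Rightarrow> complex set"
    and f :: "real ^ 'n \<Rightarrow> real"
  assumes M_compact: "compact (prod_set_real Ms)"
    and U_open: "\<And>i. open (Us i)"
    and U_connected: "\<And>i. connected (Us i)"
    and U_symm: "\<And>i z. z \<in> Us i \<Longrightarrow> cnj z \<in> Us i"
    and M_sub_U: "\<And>i. complex_of_real ` Ms i \<subseteq> Us i"
    and bdry_nonempty: "\<And>i. frontier (closure (Us i)) \<noteq> {}"
    and f_cont: "continuous_on (prod_set_real Ms) f"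
  shows "\<forall>\<epsilon>>0. \<exists>m\<ge>1. \<exists>\<theta> :: nat \<Rightarrow> complex. \<exists>\<xi> :: nat \<Rightarrow> complex ^ 'n.
           (\<forall>k\<in>{1..m}. \<xi> k \<in> prod_set_complex (\<lambda>i. frontier (closure (Us i)))) \<and>
           (\<forall>x\<in>prod_set_real Ms.
              cmod (complex_of_real (f x) - (\<Sum>k=1..m. \<theta> k * cauchy_kernel (\<xi> k) x)) < \<epsilon>)"
proof (intro allI impI)
  fix \<epsilon> :: real assume "\<epsilon> > 0"
  let ?F = "\<lambda>i. frontier (closure (Us i))"
  have "\<forall>i. \<exists>z. z \<in> ?F i"
    using bdry_nonempty by blast
  then obtain \<xi>0 where \<xi>0: "\<And>i. \<xi>0 i \<in> ?F i"
    by metis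
  have limit_point: "\<exists>a\<in>?F i. a islimpt ?F i \<and> cnj a islimpt ?F i" for i
  proof (intro bexI conjI)
    show "\<xi>0 i \<in> ?F i" by (rule \<xi>0)
    have "2 \<le> DIM(complex)" by simp
    then show "\<xi>0 i islimpt ?F i" "cnj (\<xi>0 i) islimpt ?F i"
      using \<xi>0[of i] U_open[of i] cnj_in_frontier_closure[OF U_symm]
      by (blast intro: islimpt_frontier_closure)+
  qed
  have disjoint: "complex_of_real t \<notin> ?F i" if "t \<in> Ms i" for i t
    using frontier_closure_disjoint_open[OF U_open] M_sub_U that by blast
  have "kernel_approximable cauchy_kernel (prod_set_complex ?F) (prod_set_real Ms)
      (\<lambda>x. complex_of_real (f x))"
    using M_compact limit_point disjoint f_cont by (rule cauchy_kernel_approximable)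
  moreover have "(\<chi> i. \<xi>0 i) \<in> prod_set_complex ?F"
    using \<xi>0 by (simp add: prod_set_complex_def)
  ultimately
  show "\<exists>m\<ge>1. \<exists>\<theta> :: nat \<Rightarrow> complex. \<exists>\<xi> :: nat \<Rightarrow> complex ^ 'n.
      (\<forall>k\<in>{1..m}. \<xi> k \<in> prod_set_complex ?F) \<and>
      (\<forall>x\<in>prod_set_real Ms.
         cmod (complex_of_real (f x) - (\<Sum>k=1..m. \<theta> k * cauchy_kernel (\<xi> k) x)) < \<epsilon>)"
    using \<open>\<epsilon> > 0\<close> by (rule kernel_approximable_imp_indexed_sum)
qed

end
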